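(* Let $\mathcal{G}^{c}=(\mathbb{C},\mathbb{E}^{c})$ be a C-DMG over DMGs and $\mathbb{C}_X,\mathbb{C}_Y,\mathbb{C}_Z,\mathbb{C}_W$ pairwise disjoint subsets of $\mathbb{C}$, with $X,Y,Z,W$ the unions of the clusters in them. If the $\sigma$-separation condition of one of the three do-calculus rules fails in $\mathcal{G}^c$, then there exists a DMG $\mathcal{G}$ compatible with $\mathcal{G}^c$ in which the corresponding condition fails. Explicitly: (Rule 1) if $\mathbb{C}_Y$ and $\mathbb{C}_X$ are not $\sigma$-separated given $\mathbb{C}_W,do(\mathbb{C}_Z)$ in $\mathcal{G}^c$, then $Y$ and $X$ are not $\sigma$-separated given $W,do(Z)$ in $\mathcal{G}$; (Rule 2) if $\mathbb{C}_Y$ and $\mathbb{I}_{\mathbb{C}_X}$ are not $\sigma$-separated given $\mathbb{C}_X,\mathbb{C}_W,do(\mathbb{C}_Z)$ in $\mathcal{G}^c$, then $Y$ and $\mathbb{I}_X$ are not $\sigma$-separated given $X,W,do(Z)$ in $\mathcal{G}$; (Rule 3) if $\mathbb{C}_Y$ and $\mathbb{I}_{\mathbb{C}_X}$ are not $\sigma$-separated given $\mathbb{C}_W,do(\mathbb{C}_Z)$ in $\mathcal{G}^c$, then $Y$ and $\mathbb{I}_X$ are not $\sigma$-separated given $W,do(Z)$ in $\mathcal{G}$.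
   Context: A DMG $\mathcal{G}=(\mathbb{V},\mathbb{E})$ has directed edges $\to$ and bidirected edges $\leftrightarrow$, cycles allowed (DMGs induced by input/output structural causal models in the sense of Forré–Mooij 2020). A C-DMG over DMGs $\mathcal{G}^c=(\mathbb{C},\mathbb{E}^c)$ is obtained from such a DMG: $\mathbb{C}$ is a partition of $\mathbb{V}$ into nonempty clusters, and for all $C_i,C_j$ (possibly equal) $C_i\to C_j$ (resp. $C_i\leftrightarrow C_j$) is in $\mathbb{E}^c$ iff some $V_i\in C_i,V_j\in C_j$ have $V_i\to V_j$ (resp. $V_i\leftrightarrow V_j$) in $\mathbb{E}$; $\mathcal{G}$ is then compatible with $\mathcal{G}^c$. Extended graph: add for every vertex $V$ a new vertex $I_V$ and edge $I_V\to V$; $\mathbb{I}_{\mathbb{C}_X}=\{I_C:C\in\mathbb{C}_X\}$, $\mathbb{I}_X=\{I_V:V\in X\}$. "$A$ and $B$ are $\sigma$-separated given $C,do(D)$ in $\mathcal{G}^*$" means: in the extended graph of $\mathcal{G}^*$ with all directed edges into $D$ and all bidirected edges incident to $D$ removed, $A$ and $B$ are $\sigma$-separated by $C\cup D$. $\sigma$-separation: with $\mathrm{Sc}(V)=\mathrm{Anc}(V)\cap\mathrm{Desc}(V)$ (a vertex is its own ancestor/descendant), $A\mathbin{*\!\!\to}B$ meaning $A\to B$ or $A\leftrightarrow B$, $A\mathbin{\leftarrow\!\!*}B$ meaning $A\leftarrow B$ or $A\leftrightarrow B$, a walk $\langle V_1,\dots,V_n\rangle$ is $\sigma$-blocked by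 $W$ if (1) $V_1\in W$ or $V_n\in W$; or for some $1<i<n$: (2) $V_{i-1}\mathbin{*\!\!\to}V_i\mathbin{\leftarrow\!\!*}V_{i+1}$ and $V_i\notin W$; (3) $V_{i-1}\leftarrow V_i\mathbin{\leftarrow\!\!*}V_{i+1}$ and $V_i\in W\setminus\mathrm{Sc}(V_{i-1})$; (4) $V_{i-1}\mathbin{*\!\!\to}V_i\to V_{i+1}$ and $V_i\in W\setminus\mathrm{Sc}(V_{i+1})$; (5) $V_{i-1}\leftarrow V_i\to V_{i+1}$ and $V_i\in W\setminus(\mathrm{Sc}(V_{i-1})\cap\mathrm{Sc}(V_{i+1}))$; $W$ $\sigma$-separates $A,B$ if every walk from $A$ to $B$ is $\sigma$-blocked by $W$. *)

theory Defs
  imports Main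
begin

text \<open>A DMG is given by a vertex set V, a directed edge relation D
  ((a,b) \<in> D means a \<rightarrow> b) and a bidirected edge relation B
  ((a,b) \<in> B means a \<leftrightarrow> b; B is symmetric).\<close>

definition dmg :: "'v set \<Rightarrow> ('v \<times> 'v) set \<Rightarrow> ('v \<times> 'v) set \<Rightarrow> bool" where
  "dmg V D B \<longleftrightarrow> finite V \<and> D \<subseteq> V \<times> V \<and> B \<subseteq> V \<times> V \<and> sym B
     \<and> irrefl D \<and> irrefl B"

datatype etype = Fwd | Bwd | Bid

fun edge_ok :: "('v \<times> 'v) set \<Rightarrow> ('v \<times> 'v) set \<Rightarrow> 'v \<Rightarrow> etype \<Rightarrow> 'v \<Rightarrow> bool" where
  "edge_ok D B a Fwd b = ((a, b) \<in> D)"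
| "edge_ok D B a Bwd b = ((b, a) \<in> D)"
| "edge_ok D B a Bid b = ((a, b) \<in> B)"

definition is_walk :: "'v set \<Rightarrow> ('v \<times> 'v) set \<Rightarrow> ('v \<times> 'v) set \<Rightarrow> 'v list \<Rightarrow> etype list \<Rightarrow> bool" where
  "is_walk V D B vs es \<longleftrightarrow> vs \<noteq> [] \<and> set vs \<subseteq> V \<and> length es = length vs - 1
     \<and> (\<forall>i < length es. edge_ok D B (vs ! i) (es ! i) (vs ! Suc i))"

definition anc :: "('v \<times> 'v) set \<Rightarrow> 'v \<Rightarrow> 'v set" where
  "anc D v = {u. (u, v) \<in> D\<^sup>*}"

definition desc :: "('v \<times> 'v) set \<Rightarrow> 'v \<Rightarrow> 'v set" where
  "desc D v = {u. (v, u) \<in> D\<^sup>*}"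

definition sc :: "('v \<times> 'v) set \<Rightarrow> 'v \<Rightarrow> 'v set" where
  "sc D v = anc D v \<inter> desc D v"

definition blocked_at :: "('v \<times> 'v) set \<Rightarrow> 'v set \<Rightarrow> 'v \<Rightarrow> etype \<Rightarrow> 'v \<Rightarrow> etype \<Rightarrow> 'v \<Rightarrow> bool" where
  "blocked_at D W prev l cur r nxt \<longleftrightarrow>
     (l \<in> {Fwd, Bid} \<and> r \<in> {Bwd, Bid} \<and> cur \<notin> W)
   \<or> (l = Bwd \<and> r \<in> {Bwd, Bid} \<and> cur \<in> W - sc D prev)
   \<or> (l \<in> {Fwd, Bid} \<and> r = Fwd \<and> cur \<in> W - sc D nxt)
   \<or> (l = Bwd \<and> r = Fwd \<and> cur \<in> W - (sc D prev \<inter> sc D nxt))"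

definition sigma_blocked :: "('v \<times> 'v) set \<Rightarrow> 'v list \<Rightarrow> etype list \<Rightarrow> 'v set \<Rightarrow> bool" where
  "sigma_blocked D vs es W \<longleftrightarrow> hd vs \<in> W \<or> last vs \<in> W
     \<or> (\<exists>i. 0 < i \<and> i < length vs - 1 \<and>
          blocked_at D W (vs ! (i - 1)) (es ! (i - 1)) (vs ! i) (es ! i) (vs ! Suc i))"

definition sigma_sep :: "'v set \<Rightarrow> ('v \<times> 'v) set \<Rightarrow> ('v \<times> 'v) set \<Rightarrow> 'v set \<Rightarrow> 'v set \<Rightarrow> 'v set \<Rightarrow> bool" where
  "sigma_sep V D B A A' W \<longleftrightarrow>
     (\<forall>vs es. is_walk V D B vs es \<and> hd vs \<in> A \<and> last vs \<in> A' \<longrightarrow> sigma_blocked D vs es W)"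

text \<open>Vertices of the extended graph: Inl v for the original vertex v, Inr v for I_v.\<close>

definition ext_V :: "'v set \<Rightarrow> ('v + 'v) set" where
  "ext_V V = Inl ` V \<union> Inr ` V"

definition ext_D :: "'v set \<Rightarrow> ('v \<times> 'v) set \<Rightarrow> (('v + 'v) \<times> ('v + 'v)) set" where
  "ext_D V D = {(Inl a, Inl b) | a b. (a, b) \<in> D} \<union> {(Inr v, Inl v) | v. v \<in> V}"

definition ext_B :: "('v \<times> 'v) set \<Rightarrow> (('v + 'v) \<times> ('v + 'v)) set" where
  "ext_B B = {(Inl a, Inl b) | a b. (a, b) \<in> B}"

definition cut_D :: "('a \<times> 'a) set \<Rightarrow> 'a set \<Rightarrow> ('a \<times> 'a) set" where
  "cut_D D S = {(a, b). (a, b) \<in> D \<and> b \<notin> S}"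

definition cut_B :: "('a \<times> 'a) set \<Rightarrow> 'a set \<Rightarrow> ('a \<times> 'a) set" where
  "cut_B B S = {(a, b). (a, b) \<in> B \<and> a \<notin> S \<and> b \<notin> S}"

definition sigma_sep_do :: "'v set \<Rightarrow> ('v \<times> 'v) set \<Rightarrow> ('v \<times> 'v) set \<Rightarrow>
    ('v + 'v) set \<Rightarrow> ('v + 'v) set \<Rightarrow> 'v set \<Rightarrow> 'v set \<Rightarrow> bool" where
  "sigma_sep_do V D B A A' C Z =
     sigma_sep (ext_V V) (cut_D (ext_D V D) (Inl ` Z)) (cut_B (ext_B B) (Inl ` Z))
       A A' (Inl ` (C \<union> Z))"

definition partition_of :: "'v set set \<Rightarrow> 'v set \<Rightarrow> bool" where
  "partition_of C V \<longleftrightarrow> (\<forall>c\<in>C. c \<noteq> {}) \<and> \<Union>C = V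
     \<and> (\<forall>c\<in>C. \<forall>d\<in>C. c \<noteq> d \<longrightarrow> c \<inter> d = {})"

definition compatible :: "'v set \<Rightarrow> ('v \<times> 'v) set \<Rightarrow> ('v \<times> 'v) set \<Rightarrow>
    'v set set \<Rightarrow> ('v set \<times> 'v set) set \<Rightarrow> ('v set \<times> 'v set) set \<Rightarrow> bool" where
  "compatible V D B C Dc Bc \<longleftrightarrow> dmg V D B \<and> partition_of C V
     \<and> Dc = {(ci, cj). ci \<in> C \<and> cj \<in> C \<and> (\<exists>vi\<in>ci. \<exists>vj\<in>cj. (vi, vj) \<in> D)}
     \<and> Bc = {(ci, cj). ci \<in> C \<and> cj \<in> C \<and> (\<exists>vi\<in>ci. \<exists>vj\<in>cj. (vi, vj) \<in> B)}"

definition cdmg :: "'v set set \<Rightarrow> ('v set \<times> 'v set) set \<Rightarrow> ('v set \<times> 'v set) set \<Rightarrow> bool" where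
  "cdmg C Dc Bc \<longleftrightarrow> (\<exists>V D B. compatible V D B C Dc Bc)"

end

(* Take the maximal DMG compatible with the C-DMG: its vertices are those of the clusters, and
   any two distinct vertices u in c and v in d are joined by u -> v (resp. u <-> v) whenever
   c -> d (resp. c <-> d) in the C-DMG. An open walk of the C-DMG lifts to this DMG by replacing
   each cluster by one of its vertices, alternating between two distinct vertices of the cluster
   at consecutive positions so that self-loops of clusters become genuine edges. The lift meets a
   union of clusters exactly where the walk meets the clusters, so colliders and conditioned
   vertices behave alike; and a non-collider excused by lying in the strongly connected component
   of a neighbour stays excused, since a directed cycle through clusters yields directed paths
   between any two distinct vertices of these clusters. *)

theory Submission
  imports Defs
begin

lemma sum_image_mem_simps [simp]:
  "Inl a \<in> Inl ` A \<longleftrightarrow> a \<in> A" "Inr a \<in> Inr ` A \<longleftrightarrow> a \<in> A"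
  "Inl a \<notin> Inr ` A" "Inr a \<notin> Inl ` A"
  by auto

lemma cut_ext_D_simps [simp]:
  "(Inl a, Inl b) \<in> cut_D (ext_D V D) (Inl ` Z) \<longleftrightarrow> (a, b) \<in> D \<and> b \<notin> Z"
  "(Inr a, Inl b) \<in> cut_D (ext_D V D) (Inl ` Z) \<longleftrightarrow> a = b \<and> a \<in> V \<and> b \<notin> Z"
  "(x, Inr b) \<notin> cut_D (ext_D V D) (Inl ` Z)"
  by (auto simp: cut_D_def ext_D_def)

lemma cut_ext_B_simps [simp]:
  "(Inl a, Inl b) \<in> cut_B (ext_B B) (Inl ` Z) \<longleftrightarrow> (a, b) \<in> B \<and> a \<notin> Z \<and> b \<notin> Z"
  "(Inr a, y) \<notin> cut_B (ext_B B) (Inl ` Z)"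
  "(x, Inr b) \<notin> cut_B (ext_B B) (Inl ` Z)"
  by (auto simp: cut_B_def ext_B_def)

lemma cut_ext_D_target_Inl: "(x, y) \<in> cut_D (ext_D V D) S \<Longrightarrow> \<exists>b. y = Inl b"
  by (auto simp: cut_D_def ext_D_def)

lemma Union_partition: "partition_of C V \<Longrightarrow> \<Union>C = V"
  unfolding partition_of_def by blast

abbreviation cluster_rel :: "'v set set \<Rightarrow> ('v \<times> 'v) set \<Rightarrow> ('v set \<times> 'v set) set" where
  "cluster_rel C E \<equiv> {(ci, cj). ci \<in> C \<and> cj \<in> C \<and> (\<exists>vi\<in>ci. \<exists>vj\<in>cj. (vi, vj) \<in> E)}"

definition blow_up :: "('v set \<times> 'v set) set \<Rightarrow> ('v \<times> 'v) set" where
  "blow_up R = {(u, v). u \<noteq> v \<and> (\<exists>(c, d) \<in> R. u \<in> c \<and> v \<in> d)}"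

lemma cluster_rel_blow_up:
  assumes "partition_of C V" and "irrefl E"
  shows "cluster_rel C (blow_up (cluster_rel C E)) = cluster_rel C E"
proof -
  have "c = c'" if "c \<in> C" "c' \<in> C" "v \<in> c" "v \<in> c'" for c c' v
    using assms(1) that unfolding partition_of_def by blast
  moreover have "u \<noteq> v" if "(u, v) \<in> E" for u v
    using assms(2) that unfolding irrefl_def by blast
  ultimately show ?thesis
    unfolding blow_up_def by fast
qed

lemma compatible_blow_up:
  assumes "compatible V D B C Dc Bc"
  shows "compatible V (blow_up Dc) (blow_up Bc) C Dc Bc"
proof -
  have part: "partition_of C V" and Dc: "Dc = cluster_rel C D" and Bc: "Bc = cluster_rel C B"
    and "dmg V D B"
    using assms unfolding compatible_def by auto
  then have dmg: "finite V" "sym B" "irrefl D" "irrefl B"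
    unfolding dmg_def by auto
  have "blow_up R \<subseteq> V \<times> V" if "R \<subseteq> C \<times> C" for R
    using that Union_partition[OF part] unfolding blow_up_def by blast
  moreover have "Dc \<subseteq> C \<times> C" "Bc \<subseteq> C \<times> C"
    unfolding Dc Bc by auto
  moreover have "sym (blow_up Bc)"
    using \<open>sym B\<close> unfolding Bc blow_up_def sym_def by fast
  moreover have "irrefl (blow_up R)" for R
    unfolding blow_up_def irrefl_def by blast
  ultimately have "dmg V (blow_up Dc) (blow_up Bc)"
    unfolding dmg_def using \<open>finite V\<close> by blast
  moreover have "cluster_rel C (blow_up Dc) = Dc" "cluster_rel C (blow_up Bc) = Bc"
    using cluster_rel_blow_up[OF part] dmg Dc Bc by simp_all
  ultimately show ?thesis
    using part by (simp add: compatible_def)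
qed

lemma compatible_loop_nontrivial:
  assumes "compatible V D B C Dc Bc" and "(c, c) \<in> Dc \<union> Bc"
  shows "\<exists>x\<in>c. \<exists>y\<in>c. x \<noteq> y"
proof -
  have "(c, c) \<in> cluster_rel C D \<union> cluster_rel C B" and "irrefl D" "irrefl B"
    using assms unfolding compatible_def dmg_def by auto
  then obtain u v where "u \<in> c" "v \<in> c" "(u, v) \<in> D \<union> B"
    by blast
  moreover have "u \<noteq> v"
    using \<open>(u, v) \<in> D \<union> B\<close> \<open>irrefl D\<close> \<open>irrefl B\<close> unfolding irrefl_def by blast
  ultimately show ?thesis
    by blast
qed

lemma two_representatives:
  obtains rep :: "'a set \<Rightarrow> bool \<Rightarrow> 'a"
  where "\<And>c b. c \<noteq> {} \<Longrightarrow> rep c b \<in> c"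
    and "\<And>c x y. x \<in> c \<Longrightarrow> y \<in> c \<Longrightarrow> x \<noteq> y \<Longrightarrow> rep c True \<noteq> rep c False"
proof -
  define good :: "'a set \<Rightarrow> (bool \<Rightarrow> 'a) \<Rightarrow> bool" where
    "good c r \<longleftrightarrow> (c \<noteq> {} \<longrightarrow> (\<forall>b. r b \<in> c)) \<and> (\<forall>x\<in>c. \<forall>y\<in>c. x \<noteq> y \<longrightarrow> r True \<noteq> r False)"
    for c r
  have "\<exists>r. good c r" for c
  proof (cases "\<exists>x\<in>c. \<exists>y\<in>c. x \<noteq> y")
    case True
    then obtain x y where "x \<in> c" "y \<in> c" "x \<noteq> y"
      by blast
    then show ?thesis
      by (intro exI[of _ "\<lambda>b. if b then x else y"]) (auto simp: good_def)
  next
    case False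
    then show ?thesis
      by (intro exI[of _ "\<lambda>b. SOME x. x \<in> c"]) (auto simp: good_def some_in_eq)
  qed
  then obtain rep where "good c (rep c)" for c
    by metis
  then show thesis
    by (intro that[of rep]) (auto simp: good_def)
qed

abbreviation lies_over :: "'v set + 'v set \<Rightarrow> 'v + 'v \<Rightarrow> bool" where
  "lies_over \<equiv> rel_sum (\<lambda>c v. v \<in> c) (\<lambda>c v. v \<in> c)"

definition vertices_over :: "('v set + 'v set) set \<Rightarrow> ('v + 'v) set" where
  "vertices_over A = {x'. \<exists>x\<in>A. lies_over x x'}"

lemma lies_over_Inl_iff: "lies_over (Inl c) x' \<longleftrightarrow> (\<exists>v\<in>c. x' = Inl v)"
  by (cases x') auto

lemma lies_over_Inr_iff: "lies_over (Inr c) x' \<longleftrightarrow> (\<exists>v\<in>c. x' = Inr v)"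
  by (cases x') auto

lemma vertices_over_Inl: "vertices_over (Inl ` S) = Inl ` \<Union>S"
  unfolding vertices_over_def by (auto simp: lies_over_Inl_iff)

lemma vertices_over_Inr: "vertices_over (Inr ` S) = Inr ` \<Union>S"
  unfolding vertices_over_def by (auto simp: lies_over_Inr_iff)

locale cluster_blow_up =
  fixes V :: "'v set" and C :: "'v set set" and Dc Bc :: "('v set \<times> 'v set) set"
    and rep :: "'v set \<Rightarrow> bool \<Rightarrow> 'v"
  assumes partition: "partition_of C V"
    and Dc_clusters: "Dc \<subseteq> C \<times> C" and Bc_clusters: "Bc \<subseteq> C \<times> C"
    and rep_in: "c \<in> C \<Longrightarrow> rep c b \<in> c"
    and rep_loop: "(c, c) \<in> Dc \<union> Bc \<Longrightarrow> rep c True \<noteq> rep c False"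
begin

lemma cluster_eq: "c \<in> C \<Longrightarrow> d \<in> C \<Longrightarrow> v \<in> c \<Longrightarrow> v \<in> d \<Longrightarrow> c = d"
  using partition unfolding partition_of_def by blast

lemma rep_in_V: "c \<in> C \<Longrightarrow> rep c b \<in> V"
  using rep_in Union_partition[OF partition] by blast

lemma mem_Union_clusters_iff: "S \<subseteq> C \<Longrightarrow> c \<in> C \<Longrightarrow> v \<in> c \<Longrightarrow> v \<in> \<Union>S \<longleftrightarrow> c \<in> S"
  using cluster_eq by blast

lemma rep_in_blow_up:
  assumes "(c, d) \<in> R" and "R = Dc \<or> R = Bc" and "b' = (\<not> b)"
  shows "(rep c b, rep d b') \<in> blow_up R"
proof -
  have cd: "c \<in> C" "d \<in> C"
    using assms(1,2) Dc_clusters Bc_clusters by auto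
  have "rep c b \<noteq> rep d b'"
  proof (cases "c = d")
    case True
    then show ?thesis
      using rep_loop[of c] assms by (cases b) auto
  next
    case False
    then show ?thesis
      using cd rep_in cluster_eq by metis
  qed
  then show ?thesis
    unfolding blow_up_def using assms(1) cd rep_in by blast
qed

lemma lies_over_mem_Inl_Union_iff:
  assumes "lies_over x x'" and "x \<in> ext_V C" and S: "S \<subseteq> C"
  shows "x' \<in> Inl ` \<Union>S \<longleftrightarrow> x \<in> Inl ` S"
proof -
  from assms(2) consider c where "x = Inl c" "c \<in> C" | c where "x = Inr c"
    unfolding ext_V_def by blast
  then show ?thesis
  proof cases
    case 1
    then obtain v where "x' = Inl v" "v \<in> c"
      using assms(1) by (auto simp: lies_over_Inl_iff)
    then show ?thesis
      using 1 mem_Union_clusters_iff[OF S] by simp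
  next
    case 2
    then obtain v where "x' = Inr v"
      using assms(1) by (auto simp: lies_over_Inr_iff)
    then show ?thesis
      using 2 by simp
  qed
qed

text \<open>The intervention node \<open>Inr c\<close> takes the representative that its only possible
  neighbour \<open>Inl c\<close> takes at the adjacent position of the walk.\<close>
definition lift_vertex :: "nat \<Rightarrow> 'v set + 'v set \<Rightarrow> 'v + 'v" where
  "lift_vertex i = map_sum (\<lambda>c. rep c (even i)) (\<lambda>c. rep c (odd i))"

lemma lies_over_lift_vertex: "x \<in> ext_V C \<Longrightarrow> lies_over x (lift_vertex i x)"
  by (auto simp: ext_V_def lift_vertex_def rep_in)

lemma lift_vertex_in_ext_V: "x \<in> ext_V C \<Longrightarrow> lift_vertex i x \<in> ext_V V"
  by (auto simp: ext_V_def lift_vertex_def rep_in_V)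

abbreviation cluster_D :: "'v set set \<Rightarrow> ('v set + 'v set) rel" where
  "cluster_D Z \<equiv> cut_D (ext_D C Dc) (Inl ` Z)"

abbreviation cluster_B :: "'v set set \<Rightarrow> ('v set + 'v set) rel" where
  "cluster_B Z \<equiv> cut_B (ext_B Bc) (Inl ` Z)"

abbreviation blown_D :: "'v set set \<Rightarrow> ('v + 'v) rel" where
  "blown_D Z \<equiv> cut_D (ext_D V (blow_up Dc)) (Inl ` \<Union>Z)"

abbreviation blown_B :: "'v set set \<Rightarrow> ('v + 'v) rel" where
  "blown_B Z \<equiv> cut_B (ext_B (blow_up Bc)) (Inl ` \<Union>Z)"

lemma edge_ok_lift_vertex:
  assumes Z: "Z \<subseteq> C" and "x \<in> ext_V C" "y \<in> ext_V C"
    and "edge_ok (cluster_D Z) (cluster_B Z) x t y"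
  shows "edge_ok (blown_D Z) (blown_B Z) (lift_vertex i x) t (lift_vertex (Suc i) y)"
proof -
  have "rep c b \<notin> \<Union>Z" if "c \<in> C" "c \<notin> Z" for c b
    using mem_Union_clusters_iff[OF Z that(1) rep_in[OF that(1)]] that(2) by blast
  then show ?thesis
    using assms(2-4) by (cases t) (auto simp: ext_V_def lift_vertex_def rep_in_blow_up rep_in_V)
qed

lemma blown_D_edge:
  assumes Z: "Z \<subseteq> C" and "(Inl c, Inl d) \<in> cluster_D Z" and "u \<in> c" "v \<in> d" "u \<noteq> v"
  shows "(Inl u, Inl v) \<in> blown_D Z"
proof -
  have "(c, d) \<in> Dc" "d \<notin> Z" "d \<in> C"
    using assms(2) Dc_clusters by auto
  then show ?thesis
    using assms(3-5) mem_Union_clusters_iff[OF Z] unfolding blow_up_def by auto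
qed

lemma trancl_cluster_D_blown_D:
  assumes Z: "Z \<subseteq> C" and "(Inl c, Inl d) \<in> (cluster_D Z)\<^sup>+" and "u \<in> c" "v \<in> d" "u \<noteq> v"
  shows "(Inl u, Inl v) \<in> (blown_D Z)\<^sup>+"
proof -
  have "\<forall>d v. y = Inl d \<longrightarrow> v \<in> d \<longrightarrow> u \<noteq> v \<longrightarrow> (Inl u, Inl v) \<in> (blown_D Z)\<^sup>+"
    if "(Inl c, y) \<in> (cluster_D Z)\<^sup>+" for y
    using that
  proof (induction rule: trancl_induct)
    case (base y)
    then show ?case
      using blown_D_edge[OF Z] \<open>u \<in> c\<close> by blast
  next
    case (step y z)
    obtain e where y: "y = Inl e"
      using tranclD2[OF step.hyps(1)] cut_ext_D_target_Inl by blast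
    show ?case
    proof (intro allI impI)
      fix d v assume z: "z = Inl d" and "v \<in> d" "u \<noteq> v"
      have edge: "(Inl e, Inl d) \<in> cluster_D Z"
        using step.hyps(2) y z by simp
      then have "e \<in> C"
        using Dc_clusters by auto
      define w where "w = rep e True"
      have "w \<in> e"
        unfolding w_def using rep_in[OF \<open>e \<in> C\<close>] .
      show "(Inl u, Inl v) \<in> (blown_D Z)\<^sup>+"
      proof (cases "u = w")
        case True
        then show ?thesis
          using blown_D_edge[OF Z edge _ \<open>v \<in> d\<close> \<open>u \<noteq> v\<close>] \<open>w \<in> e\<close> by blast
      next
        case False
        then have "(Inl u, Inl w) \<in> (blown_D Z)\<^sup>+"
          using step.IH y \<open>w \<in> e\<close> by blast
        moreover have "(Inl w, Inl v) \<in> blown_D Z" if "w \<noteq> v"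
          using blown_D_edge[OF Z edge \<open>w \<in> e\<close> \<open>v \<in> d\<close> that] .
        ultimately show ?thesis
          by (metis trancl_into_trancl)
      qed
    qed
  qed
  then show ?thesis
    using assms(2-5) by blast
qed

lemma sc_blown_D:
  assumes Z: "Z \<subseteq> C" and yx: "(y, x) \<in> cluster_D Z" and "y \<in> sc (cluster_D Z) x"
    and yx': "(y', x') \<in> blown_D Z" and "lies_over y y'" "lies_over x x'"
  shows "y' \<in> sc (blown_D Z) x'"
proof -
  have "(x, y) \<in> (cluster_D Z)\<^sup>*"
    using assms(3) unfolding sc_def desc_def by blast
  then have xy: "(x, y) \<in> (cluster_D Z)\<^sup>+"
    using yx by (cases "x = y") (auto dest: rtranclD)
  obtain d where "x = Inl d"
    using cut_ext_D_target_Inl[OF yx] by blast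
  moreover obtain c where "y = Inl c"
    using tranclD2[OF xy] cut_ext_D_target_Inl by blast
  ultimately obtain u v where uv: "x' = Inl u" "u \<in> d" "y' = Inl v" "v \<in> c"
    using assms(5,6) by (auto simp: lies_over_Inl_iff)
  have "u \<noteq> v"
    using yx' uv by (auto simp: blow_up_def)
  then have "(x', y') \<in> (blown_D Z)\<^sup>+"
    using trancl_cluster_D_blown_D[OF Z] xy uv \<open>x = Inl d\<close> \<open>y = Inl c\<close> by blast
  then show ?thesis
    using yx' unfolding sc_def anc_def desc_def by auto
qed

lemma blocked_at_blown_up:
  assumes Z: "Z \<subseteq> C" and S: "S \<subseteq> C"
    and xy: "edge_ok (cluster_D Z) (cluster_B Z) x l y" and yz: "edge_ok (cluster_D Z) (cluster_B Z) y r z"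
    and xy': "edge_ok (blown_D Z) (blown_B Z) x' l y'" and yz': "edge_ok (blown_D Z) (blown_B Z) y' r z'"
    and over: "lies_over x x'" "lies_over y y'" "lies_over z z'" and "y \<in> ext_V C"
    and "blocked_at (blown_D Z) (Inl ` \<Union>S) x' l y' r z'"
  shows "blocked_at (cluster_D Z) (Inl ` S) x l y r z"
proof -
  have "y' \<in> Inl ` \<Union>S \<longleftrightarrow> y \<in> Inl ` S"
    using lies_over_mem_Inl_Union_iff[OF over(2) \<open>y \<in> ext_V C\<close> S] .
  moreover have "y' \<in> sc (blown_D Z) x'" if "l = Bwd" "y \<in> sc (cluster_D Z) x"
    using sc_blown_D[OF Z _ that(2) _ over(2,1)] xy xy' that(1) by simp
  moreover have "y' \<in> sc (blown_D Z) z'" if "r = Fwd" "y \<in> sc (cluster_D Z) z"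
    using sc_blown_D[OF Z _ that(2) _ over(2,3)] yz yz' that(1) by simp
  ultimately show ?thesis
    using assms(11) unfolding blocked_at_def by blast
qed

definition lift_walk :: "('v set + 'v set) list \<Rightarrow> ('v + 'v) list" where
  "lift_walk vs = map (\<lambda>i. lift_vertex i (vs ! i)) [0..<length vs]"

lemma length_lift_walk [simp]: "length (lift_walk vs) = length vs"
  by (simp add: lift_walk_def)

lemma nth_lift_walk [simp]: "i < length vs \<Longrightarrow> lift_walk vs ! i = lift_vertex i (vs ! i)"
  by (simp add: lift_walk_def)

lemma lift_walk_eq_Nil_iff [simp]: "lift_walk vs = [] \<longleftrightarrow> vs = []"
  by (simp add: lift_walk_def)

lemma lies_over_nth_lift_walk:
  "set vs \<subseteq> ext_V C \<Longrightarrow> i < length vs \<Longrightarrow> lies_over (vs ! i) (lift_walk vs ! i)"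
  using lies_over_lift_vertex nth_mem by fastforce

lemma is_walk_lift_walk:
  assumes Z: "Z \<subseteq> C" and "is_walk (ext_V C) (cluster_D Z) (cluster_B Z) vs es"
  shows "is_walk (ext_V V) (blown_D Z) (blown_B Z) (lift_walk vs) es"
proof -
  have vs: "vs \<noteq> []" "set vs \<subseteq> ext_V C" "length es = length vs - 1"
    and edges: "\<And>i. i < length es \<Longrightarrow> edge_ok (cluster_D Z) (cluster_B Z) (vs ! i) (es ! i) (vs ! Suc i)"
    using assms(2) unfolding is_walk_def by auto
  have "set (lift_walk vs) \<subseteq> ext_V V"
    using vs(2) lift_vertex_in_ext_V nth_mem by (fastforce simp: lift_walk_def)
  moreover have "edge_ok (blown_D Z) (blown_B Z) (lift_walk vs ! i) (es ! i) (lift_walk vs ! Suc i)"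
    if "i < length es" for i
    using edge_ok_lift_vertex[OF Z _ _ edges[OF that]] that vs nth_mem by (simp add: subset_iff)
  ultimately show ?thesis
    using vs unfolding is_walk_def by auto
qed

lemma sigma_blocked_lift_walk:
  assumes Z: "Z \<subseteq> C" and S: "S \<subseteq> C" and w: "is_walk (ext_V C) (cluster_D Z) (cluster_B Z) vs es"
    and "sigma_blocked (blown_D Z) (lift_walk vs) es (Inl ` \<Union>S)"
  shows "sigma_blocked (cluster_D Z) vs es (Inl ` S)"
proof -
  have vs: "vs \<noteq> []" "set vs \<subseteq> ext_V C" "length es = length vs - 1"
    and edges: "\<And>i. i < length es \<Longrightarrow> edge_ok (cluster_D Z) (cluster_B Z) (vs ! i) (es ! i) (vs ! Suc i)"
    using w unfolding is_walk_def by auto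
  have edges': "\<And>i. i < length es \<Longrightarrow>
      edge_ok (blown_D Z) (blown_B Z) (lift_walk vs ! i) (es ! i) (lift_walk vs ! Suc i)"
    using is_walk_lift_walk[OF Z w] unfolding is_walk_def by auto
  have over: "lies_over (vs ! i) (lift_walk vs ! i)" and in_C: "vs ! i \<in> ext_V C"
    if "i < length vs" for i
    using lies_over_nth_lift_walk[OF vs(2) that] nth_mem[OF that] vs(2) by auto
  have W: "lift_walk vs ! i \<in> Inl ` \<Union>S \<longleftrightarrow> vs ! i \<in> Inl ` S" if "i < length vs" for i
    using lies_over_mem_Inl_Union_iff[OF over[OF that] in_C[OF that] S] .
  from assms(4) consider "hd (lift_walk vs) \<in> Inl ` \<Union>S" | "last (lift_walk vs) \<in> Inl ` \<Union>S"
    | i where "0 < i" "i < length vs - 1" "blocked_at (blown_D Z) (Inl ` \<Union>S)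
        (lift_walk vs ! (i - 1)) (es ! (i - 1)) (lift_walk vs ! i) (es ! i) (lift_walk vs ! Suc i)"
    unfolding sigma_blocked_def by auto
  then show ?thesis
  proof cases
    case 1
    then show ?thesis
      using W[of 0] vs(1) unfolding sigma_blocked_def by (simp add: hd_conv_nth)
  next
    case 2
    then show ?thesis
      using W[of "length vs - 1"] vs(1) unfolding sigma_blocked_def by (simp add: last_conv_nth)
  next
    case (3 i)
    then have i: "i - 1 < length es" "i < length es" "Suc (i - 1) = i"
      and bounds: "i - 1 < length vs" "i < length vs" "Suc i < length vs"
      using vs(3) by auto
    have "edge_ok (cluster_D Z) (cluster_B Z) (vs ! (i - 1)) (es ! (i - 1)) (vs ! i)"
      and "edge_ok (blown_D Z) (blown_B Z) (lift_walk vs ! (i - 1)) (es ! (i - 1)) (lift_walk vs ! i)"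
      using edges[OF i(1)] edges'[OF i(1)] i(3) by simp_all
    then have "blocked_at (cluster_D Z) (Inl ` S) (vs ! (i - 1)) (es ! (i - 1)) (vs ! i) (es ! i) (vs ! Suc i)"
      using blocked_at_blown_up[OF Z S _ edges[OF i(2)] _ edges'[OF i(2)]
          over[OF bounds(1)] over[OF bounds(2)] over[OF bounds(3)] in_C[OF bounds(2)] 3(3)]
      by blast
    then show ?thesis
      using 3 unfolding sigma_blocked_def by blast
  qed
qed

lemma not_sigma_sep_blown_up:
  assumes Z: "Z \<subseteq> C" and S: "S \<subseteq> C"
    and "\<not> sigma_sep (ext_V C) (cluster_D Z) (cluster_B Z) A A' (Inl ` S)"
  shows "\<not> sigma_sep (ext_V V) (blown_D Z) (blown_B Z) (vertices_over A) (vertices_over A') (Inl ` \<Union>S)"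
proof -
  obtain vs es where w: "is_walk (ext_V C) (cluster_D Z) (cluster_B Z) vs es"
    and "hd vs \<in> A" "last vs \<in> A'" and "\<not> sigma_blocked (cluster_D Z) vs es (Inl ` S)"
    using assms(3) unfolding sigma_sep_def by blast
  moreover have "vs \<noteq> []" "set vs \<subseteq> ext_V C"
    using w unfolding is_walk_def by auto
  then have "lies_over (hd vs) (hd (lift_walk vs))" "lies_over (last vs) (last (lift_walk vs))"
    using lies_over_nth_lift_walk by (simp_all add: hd_conv_nth last_conv_nth)
  ultimately show ?thesis
    using is_walk_lift_walk[OF Z w] sigma_blocked_lift_walk[OF Z S w]
    unfolding sigma_sep_def vertices_over_def by blast
qed

lemma not_sigma_sep_do_blow_up:
  assumes "S \<subseteq> C" and "Z \<subseteq> C" and "\<not> sigma_sep_do C Dc Bc A A' S Z"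
  shows "\<not> sigma_sep_do V (blow_up Dc) (blow_up Bc) (vertices_over A) (vertices_over A') (\<Union>S) (\<Union>Z)"
  using not_sigma_sep_blown_up[of Z "S \<union> Z" A A'] assms unfolding sigma_sep_do_def by simp

end

lemma exists_compatible_not_sigma_sep_do:
  fixes C :: "'v set set"
  assumes "cdmg C Dc Bc" and "S \<subseteq> C" and "Z \<subseteq> C" and "\<not> sigma_sep_do C Dc Bc A A' S Z"
  shows "\<exists>V D B. compatible V D B C Dc Bc
    \<and> \<not> sigma_sep_do V D B (vertices_over A) (vertices_over A') (\<Union>S) (\<Union>Z)"
proof -
  obtain V D B where compat: "compatible V D B C Dc Bc"
    using assms(1) unfolding cdmg_def by blast
  obtain rep :: "'v set \<Rightarrow> bool \<Rightarrow> 'v" where rep_in: "\<And>c b. c \<noteq> {} \<Longrightarrow> rep c b \<in> c"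
    and rep_distinct: "\<And>c x y. x \<in> c \<Longrightarrow> y \<in> c \<Longrightarrow> x \<noteq> y \<Longrightarrow> rep c True \<noteq> rep c False"
    using two_representatives by metis
  interpret cluster_blow_up V C Dc Bc rep
  proof
    show part: "partition_of C V" and "Dc \<subseteq> C \<times> C" "Bc \<subseteq> C \<times> C"
      using compat unfolding compatible_def by auto
    show "rep c b \<in> c" if "c \<in> C" for c b
    proof (rule rep_in)
      show "c \<noteq> {}"
        using part that unfolding partition_of_def by blast
    qed
    show "rep c True \<noteq> rep c False" if "(c, c) \<in> Dc \<union> Bc" for c
      using compatible_loop_nontrivial[OF compat that] rep_distinct by metis
  qed
  show ?thesis
    using compatible_blow_up[OF compat] not_sigma_sep_do_blow_up[OF assms(2-4)] by blast
qed

theorem theorem4: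
  fixes C :: "'v set set"
    and Dc Bc :: "('v set \<times> 'v set) set"
    and CX CY CZ CW :: "'v set set"
  assumes "cdmg C Dc Bc"
    and "CX \<subseteq> C" "CY \<subseteq> C" "CZ \<subseteq> C" "CW \<subseteq> C"
    and "CX \<inter> CY = {}" "CX \<inter> CZ = {}" "CX \<inter> CW = {}"
    and "CY \<inter> CZ = {}" "CY \<inter> CW = {}" "CZ \<inter> CW = {}"
  shows
    "(\<not> sigma_sep_do C Dc Bc (Inl ` CY) (Inl ` CX) CW CZ \<longrightarrow>
       (\<exists>V D B. compatible V D B C Dc Bc \<and>
          \<not> sigma_sep_do V D B (Inl ` \<Union>CY) (Inl ` \<Union>CX) (\<Union>CW) (\<Union>CZ)))
   \<and> (\<not> sigma_sep_do C Dc Bc (Inl ` CY) (Inr ` CX) (CX \<union> CW) CZ \<longrightarrow>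
       (\<exists>V D B. compatible V D B C Dc Bc \<and>
          \<not> sigma_sep_do V D B (Inl ` \<Union>CY) (Inr ` \<Union>CX) (\<Union>CX \<union> \<Union>CW) (\<Union>CZ)))
   \<and> (\<not> sigma_sep_do C Dc Bc (Inl ` CY) (Inr ` CX) CW CZ \<longrightarrow>
       (\<exists>V D B. compatible V D B C Dc Bc \<and>
          \<not> sigma_sep_do V D B (Inl ` \<Union>CY) (Inr ` \<Union>CX) (\<Union>CW) (\<Union>CZ)))"
proof -
  have lift: "\<exists>V D B. compatible V D B C Dc Bc \<and>
      \<not> sigma_sep_do V D B (vertices_over A) (vertices_over A') (\<Union>S) (\<Union>CZ)"
    if "S \<subseteq> C" and "\<not> sigma_sep_do C Dc Bc A A' S CZ" for A A' S
    using exists_compatible_not_sigma_sep_do[OF assms(1) that(1) assms(4) that(2)] .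
  have "CX \<union> CW \<subseteq> C"
    using assms(2,5) by blast
  then show ?thesis
    using lift[of CW "Inl ` CY" "Inl ` CX"] lift[of "CX \<union> CW" "Inl ` CY" "Inr ` CX"]
      lift[of CW "Inl ` CY" "Inr ` CX"] assms(5)
    by (simp add: vertices_over_Inl vertices_over_Inr)
qed

end
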